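(* Let $c$ be continuous and satisfy (C1)–(C3). Let $0\le\overline h\in L^\infty(\mathbb{R}^d\times\mathbb{R}^d)$ have compact support and let $0\le f,g\in L^1_c(\mathbb{R}^d)$ with $\Gamma(f,g)^{\overline h}\ne\emptyset$. If $h\in\Gamma(f,g)^{\overline h}$ minimizes $I_c$ over $\Gamma(f,g)^{\overline h}$, then $h$ is geometrically extreme.
   Context: Cost assumptions: (C1) $c$ is bounded; (C2) there is a Lebesgue-negligible closed set $Z\subset\mathbb{R}^d\times\mathbb{R}^d$ with $c\in C^2((\mathbb{R}^d\times\mathbb{R}^d)\setminus Z)$; (C3) $\det D^2_{xy}c(x,y)\ne0$ for all $(x,y)\notin Z$, where $D^2_{xy}c=(\partial^2c/\partial x_i\partial y_j)_{i,j}$. $L^1_c$: integrable functions with compact support. $\Gamma(f,g)$: the $0\le h\in L^1_c(\mathbb{R}^d\times\mathbb{R}^d)$ with $\int h(x,y)dy=f(x)$ and $\int h(x,y)dx=g(y)$ a.e.; $\Gamma(f,g)^{\overline h}:=\{h\in\Gamma(f,g):h\le\overline h\text{ a.e.}\}$. $I_c(h):=\int c\,h\,dx\,dy$. A density $h\in\Gamma(f,g)^{\overline h}$ is geometrically extreme if there is a Lebesgue measurable $W\subset\mathbb{R}^{2d}$ with $h=\overline h\,1_W$ almost everywhere. *)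

theory Defs
  imports "HOL-Analysis.Analysis"
begin

type_synonym 'n pt = "real ^ 'n"
type_synonym 'n pp = "(real ^ 'n) \<times> (real ^ 'n)"

definition has_pderiv :: "('b::real_normed_vector \<Rightarrow> real) \<Rightarrow> 'b \<Rightarrow> 'b \<Rightarrow> real \<Rightarrow> bool" where
  "has_pderiv F v z D \<longleftrightarrow> ((\<lambda>t. F (z + t *\<^sub>R v)) has_real_derivative D) (at 0)"

definition pderiv :: "('b::real_normed_vector \<Rightarrow> real) \<Rightarrow> 'b \<Rightarrow> 'b \<Rightarrow> real" where
  "pderiv F v z = deriv (\<lambda>t. F (z + t *\<^sub>R v)) 0"

definition C2_on :: "'b::euclidean_space set \<Rightarrow> ('b \<Rightarrow> real) \<Rightarrow> bool" where
  "C2_on U F \<longleftrightarrow> open U \<and> continuous_on U F \<and>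
     (\<forall>b1\<in>Basis. (\<forall>z\<in>U. has_pderiv F b1 z (pderiv F b1 z)) \<and> continuous_on U (pderiv F b1) \<and>
        (\<forall>b2\<in>Basis. (\<forall>z\<in>U. has_pderiv (pderiv F b1) b2 z (pderiv (pderiv F b1) b2 z)) \<and>
                    continuous_on U (pderiv (pderiv F b1) b2)))"

text \<open>Mixed Hessian D^2_{xy} c (x,y) = (d^2 c / dx_i dy_j)_{i,j}.\<close>
definition mixed_hess :: "('n::finite pp \<Rightarrow> real) \<Rightarrow> 'n pt \<Rightarrow> 'n pt \<Rightarrow> real ^ 'n ^ 'n" where
  "mixed_hess c x y = (\<chi> i j. pderiv (pderiv c (0, axis j 1)) (axis i 1, 0) (x, y))"

definition cost_assms :: "('n::finite pp \<Rightarrow> real) \<Rightarrow> bool" where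
  "cost_assms c \<longleftrightarrow>
     (\<exists>M. \<forall>z. \<bar>c z\<bar> \<le> M) \<and>
     (\<exists>Z. closed Z \<and> Z \<in> null_sets lebesgue \<and> C2_on (- Z) c \<and>
          (\<forall>x y. (x, y) \<notin> Z \<longrightarrow> det (mixed_hess c x y) \<noteq> 0))"

definition L1c :: "('b::euclidean_space \<Rightarrow> real) \<Rightarrow> bool" where
  "L1c F \<longleftrightarrow> integrable lebesgue F \<and> (\<exists>K. compact K \<and> (AE z in lebesgue. z \<notin> K \<longrightarrow> F z = 0))"

definition Gamma :: "('n::finite pt \<Rightarrow> real) \<Rightarrow> ('n pt \<Rightarrow> real) \<Rightarrow> ('n pp \<Rightarrow> real) set" where
  "Gamma f g = {h. L1c h \<and> (AE z in lebesgue. 0 \<le> h z) \<and>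
      (AE x in lebesgue. (\<integral>y. h (x, y) \<partial>lebesgue) = f x) \<and>
      (AE y in lebesgue. (\<integral>x. h (x, y) \<partial>lebesgue) = g y)}"

definition Gamma_bd :: "('n::finite pt \<Rightarrow> real) \<Rightarrow> ('n pt \<Rightarrow> real) \<Rightarrow> ('n pp \<Rightarrow> real) \<Rightarrow> ('n pp \<Rightarrow> real) set" where
  "Gamma_bd f g hb = {h \<in> Gamma f g. AE z in lebesgue. h z \<le> hb z}"

definition I_c :: "('n::finite pp \<Rightarrow> real) \<Rightarrow> ('n pp \<Rightarrow> real) \<Rightarrow> real" where
  "I_c c h = (\<integral>z. c z * h z \<partial>lebesgue)"

definition geom_extreme :: "('n::finite pp \<Rightarrow> real) \<Rightarrow> ('n pp \<Rightarrow> real) \<Rightarrow> bool" where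
  "geom_extreme hb h \<longleftrightarrow> (\<exists>W \<in> sets lebesgue. AE z in lebesgue. h z = hb z * indicator W z)"

end

theory Submission
  imports Defs
begin

text \<open>
  Suppose the minimiser h is not of the form hb * 1_W.  Then for some \<delta> > 0 the
  slack set S = {\<delta> \<le> h \<le> hb - \<delta>} has positive measure.  Since the mixed Hessian of c
  is invertible off the null set Z, some mixed second partial derivative of c has a
  fixed sign \<sigma> on a ball meeting S in positive measure; by the mean value theorem the
  rectangle difference c(z+(a,b)) - c(z+(a,0)) - c(z+(0,b)) + c(z) has sign \<sigma> there for
  small axis steps a, b.  A Steinhaus-type argument yields a compact set E of positive
  measure all of whose rectangle corners lie in S.  Adding a small multiple of
  1_E - 1_(E+(a,0)) - 1_(E+(0,b)) + 1_(E+(a,b)) to h keeps both marginals and the bounds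
  0 \<le> h \<le> hb, but strictly lowers the cost -- contradicting minimality.
\<close>

lemma has_pderiv_along_line:
  fixes F :: "'a::real_normed_vector \<Rightarrow> real"
  assumes "has_pderiv F v (w + t *\<^sub>R v) D"
  shows "((\<lambda>s. F (w + s *\<^sub>R v)) has_real_derivative D) (at t)"
proof -
  have "((\<lambda>s. F ((w + t *\<^sub>R v) + s *\<^sub>R v)) has_real_derivative D) (at 0)"
    using assms by (simp add: has_pderiv_def)
  moreover have "(\<lambda>s. F ((w + t *\<^sub>R v) + s *\<^sub>R v)) = (\<lambda>s. F (w + (s + t) *\<^sub>R v))"
    by (simp add: algebra_simps)
  ultimately show ?thesis
    using DERIV_shift[of "\<lambda>s. F (w + s *\<^sub>R v)" D 0 t] by simp
qed

text \<open>Mean value theorem for the mixed second difference: two successive one-dimensional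
  mean value theorems express it as \<epsilon>^2 times the mixed derivative at an interior point.\<close>

lemma mixed_second_difference_mvt:
  fixes F G H :: "'a::real_normed_vector \<Rightarrow> real"
  assumes dG: "\<And>w. w \<in> U \<Longrightarrow> has_pderiv F e2 w (G w)"
    and dH: "\<And>w. w \<in> U \<Longrightarrow> has_pderiv G e1 w (H w)"
    and \<epsilon>: "\<epsilon> > 0"
    and inU: "\<And>s t. 0 \<le> s \<Longrightarrow> s \<le> \<epsilon> \<Longrightarrow> 0 \<le> t \<Longrightarrow> t \<le> \<epsilon> \<Longrightarrow> z + s *\<^sub>R e1 + t *\<^sub>R e2 \<in> U"
  obtains s t where "0 \<le> s" "s \<le> \<epsilon>" "0 \<le> t" "t \<le> \<epsilon>"
    "F (z + \<epsilon> *\<^sub>R e1 + \<epsilon> *\<^sub>R e2) - F (z + \<epsilon> *\<^sub>R e1) - F (z + \<epsilon> *\<^sub>R e2) + F z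
       = \<epsilon>\<^sup>2 * H (z + s *\<^sub>R e1 + t *\<^sub>R e2)"
proof -
  define p where "p t = F (z + \<epsilon> *\<^sub>R e1 + t *\<^sub>R e2) - F (z + t *\<^sub>R e2)" for t
  have "DERIV p t :> G (z + \<epsilon> *\<^sub>R e1 + t *\<^sub>R e2) - G (z + t *\<^sub>R e2)"
    if "0 \<le> t" "t \<le> \<epsilon>" for t
  proof -
    have "z + \<epsilon> *\<^sub>R e1 + t *\<^sub>R e2 \<in> U" "z + t *\<^sub>R e2 \<in> U"
      using inU[of \<epsilon> t] inU[of 0 t] that \<epsilon> by simp_all
    then have "((\<lambda>s. F ((z + \<epsilon> *\<^sub>R e1) + s *\<^sub>R e2)) has_real_derivative G (z + \<epsilon> *\<^sub>R e1 + t *\<^sub>R e2)) (at t)"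
      and "((\<lambda>s. F (z + s *\<^sub>R e2)) has_real_derivative G (z + t *\<^sub>R e2)) (at t)"
      by (auto intro!: has_pderiv_along_line dG)
    from DERIV_diff[OF this] show ?thesis unfolding p_def by simp
  qed
  from MVT2[OF \<epsilon> this] obtain t0 where t0: "0 < t0" "t0 < \<epsilon>"
    and p_diff: "p \<epsilon> - p 0 = \<epsilon> * (G (z + \<epsilon> *\<^sub>R e1 + t0 *\<^sub>R e2) - G (z + t0 *\<^sub>R e2))"
    by auto
  define q where "q s = G (z + t0 *\<^sub>R e2 + s *\<^sub>R e1)" for s
  have "DERIV q s :> H (z + t0 *\<^sub>R e2 + s *\<^sub>R e1)" if "0 \<le> s" "s \<le> \<epsilon>" for s
  proof -
    have "z + t0 *\<^sub>R e2 + s *\<^sub>R e1 \<in> U" using inU[of s t0] that t0 by (simp add: algebra_simps)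
    then show ?thesis unfolding q_def by (intro has_pderiv_along_line) (simp add: dH)
  qed
  from MVT2[OF \<epsilon> this] obtain s0 where s0: "0 < s0" "s0 < \<epsilon>"
    and q_diff: "q \<epsilon> - q 0 = \<epsilon> * H (z + t0 *\<^sub>R e2 + s0 *\<^sub>R e1)"
    by auto
  have "F (z + \<epsilon> *\<^sub>R e1 + \<epsilon> *\<^sub>R e2) - F (z + \<epsilon> *\<^sub>R e1) - F (z + \<epsilon> *\<^sub>R e2) + F z = p \<epsilon> - p 0"
    by (simp add: p_def)
  also have "\<dots> = \<epsilon> * (q \<epsilon> - q 0)" using p_diff by (simp add: q_def algebra_simps)
  also have "\<dots> = \<epsilon>\<^sup>2 * H (z + s0 *\<^sub>R e1 + t0 *\<^sub>R e2)"
    using q_diff by (simp add: power2_eq_square algebra_simps)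
  finally show ?thesis using s0 t0 by (intro that[of s0 t0]) auto
qed

definition mixed_partial :: "('n::finite pp \<Rightarrow> real) \<Rightarrow> 'n \<Rightarrow> 'n \<Rightarrow> 'n pp \<Rightarrow> real" where
  "mixed_partial c i j = pderiv (pderiv c (0, axis j 1)) (axis i 1, 0)"

definition rect_difference :: "('a::monoid_add \<times> 'b::monoid_add \<Rightarrow> real) \<Rightarrow> 'a \<Rightarrow> 'b \<Rightarrow> 'a \<times> 'b \<Rightarrow> real" where
  "rect_difference c a b z = c (z + (a, b)) - c (z + (a, 0)) - c (z + (0, b)) + c z"

lemma axis_pairs_in_Basis:
  "((axis i 1, 0) :: 'n::finite pp) \<in> Basis" "((0, axis j 1) :: 'n::finite pp) \<in> Basis"
  by (auto simp: Basis_prod_def)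

lemma rect_difference_continuous:
  fixes c :: "'a::real_normed_vector \<times> 'b::real_normed_vector \<Rightarrow> real"
  assumes "continuous_on UNIV c"
  shows "continuous_on UNIV (rect_difference c a b)"
  unfolding rect_difference_def[abs_def]
  by (intro continuous_intros continuous_on_compose2[OF assms]) (simp_all add: continuous_on_add)

text \<open>Off Z every row of the invertible mixed Hessian, hence some entry, is nonzero; by
  continuity that entry keeps its sign \<sigma> on a small ball inside -Z.\<close>

lemma mixed_partial_local_sign:
  fixes c :: "'n::finite pp \<Rightarrow> real"
  assumes C2: "C2_on (-Z) c" and det: "\<forall>x y. (x,y) \<notin> Z \<longrightarrow> det (mixed_hess c x y) \<noteq> 0"
    and z: "z \<notin> Z"
  obtains i j \<sigma> r where "r > 0" "\<sigma> \<in> {-1, 1::real}" "ball z r \<subseteq> -Z"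
    "\<forall>w\<in>ball z r. \<sigma> * mixed_partial c i j w > 0"
proof -
  obtain x y where xy: "z = (x, y)" by (cases z)
  have "det (mixed_hess c x y) \<noteq> 0" using det z xy by auto
  then have "row undefined (mixed_hess c x y) \<noteq> 0" using det_zero_row(1) by blast
  then obtain i j where H_nz: "mixed_partial c i j z \<noteq> 0"
    by (auto simp: row_def vec_eq_iff mixed_hess_def mixed_partial_def xy)
  define H where "H = mixed_partial c i j"
  have op: "open (-Z)" using C2 by (simp add: C2_on_def)
  have "continuous_on (-Z) H"
    using C2 axis_pairs_in_Basis unfolding C2_on_def H_def mixed_partial_def by blast
  then have "isCont H z" using op z continuous_on_eq_continuous_at by blast
  then obtain d where d: "d > 0" "\<And>w. dist w z < d \<Longrightarrow> dist (H w) (H z) < \<bar>H z\<bar>"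
    using H_nz unfolding continuous_at_eps_delta H_def by (metis zero_less_abs_iff)
  obtain e where e: "e > 0" "ball z e \<subseteq> -Z" using op z open_contains_ball by blast
  define \<sigma> where "\<sigma> = (if H z > 0 then 1 else -1::real)"
  have "\<sigma> * H w > 0" if "w \<in> ball z (min d e)" for w
  proof -
    have "dist (H w) (H z) < \<bar>H z\<bar>" using that d by (auto simp: dist_commute)
    then show ?thesis unfolding \<sigma>_def dist_real_def by (auto split: if_splits)
  qed
  then show ?thesis
    using d e by (intro that[of "min d e" \<sigma> i j]) (auto simp: \<sigma>_def H_def)
qed

text \<open>The balls on which some mixed partial has a fixed sign cover -Z; by Lindelof countably
  many suffice, so one of them (with its double) meets any non-null set in positive measure.\<close>

lemma sign_ball_hits_set:
  fixes c :: "'n::finite pp \<Rightarrow> real"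
  assumes C2: "C2_on (-Z) c" and det: "\<forall>x y. (x,y) \<notin> Z \<longrightarrow> det (mixed_hess c x y) \<noteq> 0"
    and Z_null: "Z \<in> null_sets lebesgue"
    and S: "S \<in> sets lebesgue" "S \<notin> null_sets lebesgue"
  obtains w \<rho> i j \<sigma> where "\<rho> > 0" "\<sigma> \<in> {-1, 1::real}" "ball w (2 * \<rho>) \<subseteq> -Z"
    "\<forall>u\<in>ball w (2 * \<rho>). \<sigma> * mixed_partial c i j u > 0" "S \<inter> ball w \<rho> \<notin> null_sets lebesgue"
proof -
  define good where "good w \<rho> \<longleftrightarrow> \<rho> > 0 \<and> (\<exists>i j \<sigma>. \<sigma> \<in> {-1, 1::real} \<and>
     ball w (2 * \<rho>) \<subseteq> -Z \<and> (\<forall>u\<in>ball w (2 * \<rho>). \<sigma> * mixed_partial c i j u > 0))"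
    for w :: "'n pp" and \<rho>
  define F where "F = {ball w \<rho> | w \<rho>. good w \<rho>}"
  have cover: "-Z \<subseteq> \<Union>F"
  proof
    fix z assume "z \<in> -Z"
    then obtain i j \<sigma> r where "r > 0" "\<sigma> \<in> {-1, 1::real}" "ball z r \<subseteq> -Z"
      "\<forall>w\<in>ball z r. \<sigma> * mixed_partial c i j w > 0"
      using mixed_partial_local_sign[OF C2 det] by (metis ComplD)
    then have "good z (r/2)" "z \<in> ball z (r/2)" unfolding good_def by auto
    then show "z \<in> \<Union>F" unfolding F_def by blast
  qed
  obtain F' where F': "F' \<subseteq> F" "countable F'" "\<Union>F' = \<Union>F"
    using Lindelof[of F] unfolding F_def by blast
  have "\<exists>B\<in>F'. S \<inter> B \<notin> null_sets lebesgue"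
  proof (rule ccontr)
    assume "\<not> ?thesis"
    then have "Z \<union> (\<Union>B\<in>F'. S \<inter> B) \<in> null_sets lebesgue"
      using F'(2) Z_null by (intro null_sets.Un null_sets_UN') auto
    moreover have "S \<subseteq> Z \<union> (\<Union>B\<in>F'. S \<inter> B)" using cover F'(3) by auto
    ultimately show False using S null_sets_subset by blast
  qed
  then show ?thesis
    using F'(1) that unfolding F_def good_def by blast
qed

lemma rect_difference_sign:
  fixes c :: "'n::finite pp \<Rightarrow> real"
  assumes C2: "C2_on (-Z) c" and B: "ball w (2 * \<rho>) \<subseteq> -Z"
    and sign: "\<forall>u\<in>ball w (2 * \<rho>). \<sigma> * mixed_partial c i j u > 0"
    and z: "z \<in> ball w \<rho>" and \<epsilon>: "0 < \<epsilon>" "2 * \<epsilon> \<le> \<rho>"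
  shows "\<sigma> * rect_difference c (\<epsilon> *\<^sub>R axis i 1) (\<epsilon> *\<^sub>R axis j 1) z > 0"
proof -
  define e1 :: "'n pp" where "e1 = (axis i 1, 0)"
  define e2 :: "'n pp" where "e2 = (0, axis j 1)"
  have in_ball: "z + s *\<^sub>R e1 + t *\<^sub>R e2 \<in> ball w (2 * \<rho>)"
    if "0 \<le> s" "s \<le> \<epsilon>" "0 \<le> t" "t \<le> \<epsilon>" for s t
  proof -
    have "norm (s *\<^sub>R e1 + t *\<^sub>R e2) \<le> s + t"
      using norm_triangle_ineq[of "s *\<^sub>R e1" "t *\<^sub>R e2"] that by (simp add: e1_def e2_def)
    moreover have "dist w (z + (s *\<^sub>R e1 + t *\<^sub>R e2)) \<le> dist w z + norm (s *\<^sub>R e1 + t *\<^sub>R e2)"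
      using dist_triangle[of w "z + (s *\<^sub>R e1 + t *\<^sub>R e2)" z] by (simp add: dist_norm norm_minus_commute add.commute)
    ultimately show ?thesis using z that \<epsilon> by (simp add: add.assoc)
  qed
  have derivs: "has_pderiv c e2 u (pderiv c e2 u)"
      "has_pderiv (pderiv c e2) e1 u (mixed_partial c i j u)" if "u \<in> ball w (2 * \<rho>)" for u
    using C2 axis_pairs_in_Basis B that
    unfolding C2_on_def e1_def e2_def mixed_partial_def by blast+
  obtain s t where st: "0 \<le> s" "s \<le> \<epsilon>" "0 \<le> t" "t \<le> \<epsilon>"
    and eq: "c (z + \<epsilon> *\<^sub>R e1 + \<epsilon> *\<^sub>R e2) - c (z + \<epsilon> *\<^sub>R e1) - c (z + \<epsilon> *\<^sub>R e2) + c z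
       = \<epsilon>\<^sup>2 * mixed_partial c i j (z + s *\<^sub>R e1 + t *\<^sub>R e2)"
    using mixed_second_difference_mvt[OF derivs \<epsilon>(1) in_ball] by blast
  have "\<sigma> * mixed_partial c i j (z + s *\<^sub>R e1 + t *\<^sub>R e2) > 0" using sign in_ball[OF st] by blast
  then have "\<sigma> * (\<epsilon>\<^sup>2 * mixed_partial c i j (z + s *\<^sub>R e1 + t *\<^sub>R e2)) > 0"
    using \<epsilon> by (metis mult.left_commute mult_pos_pos zero_less_power)
  then show ?thesis using eq by (simp add: rect_difference_def e1_def e2_def add.assoc)
qed

lemma small_translate_stays_in_neighbourhood:
  fixes T :: "'a::real_normed_vector set"
  assumes sep: "\<forall>x\<in>T. \<forall>y\<in>-U. \<delta> \<le> dist x y" and v: "norm v < \<delta>"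
  shows "{z \<in> T. z + v \<notin> T} \<subseteq> (+) (-v) ` (U - T)"
proof
  fix z assume z: "z \<in> {z \<in> T. z + v \<notin> T}"
  have "z + v \<in> U"
  proof (rule ccontr)
    assume "z + v \<notin> U"
    then have "\<delta> \<le> dist z (z + v)" using sep z by auto
    then show False using v by (simp add: dist_norm)
  qed
  then show "z \<in> (+) (-v) ` (U - T)"
    using z by (auto intro!: image_eqI[of _ _ "z + v"])
qed

lemma measure_translation_core_lower_bound:
  fixes T :: "'a::euclidean_space set"
  assumes T: "compact T" and UT: "U - T \<in> lmeasurable"
    and sep: "\<forall>x\<in>T. \<forall>y\<in>-U. \<delta> \<le> dist x y"
    and V: "finite V" "\<forall>v\<in>V. norm v < \<delta>"
  shows "compact {z \<in> T. \<forall>v\<in>V. z + v \<in> T}"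
    and "measure lebesgue T - card V * measure lebesgue (U - T)
           \<le> measure lebesgue {z \<in> T. \<forall>v\<in>V. z + v \<in> T}"
proof -
  define E where "E = {z \<in> T. \<forall>v\<in>V. z + v \<in> T}"
  have shift_closed: "closed ((\<lambda>z. z + v) -` T)" for v
    using T by (intro closed_vimage compact_imp_closed continuous_intros)
  have "E = T \<inter> (\<Inter>v\<in>V. (\<lambda>z. z + v) -` T)" by (auto simp: E_def)
  then show E_compact: "compact {z \<in> T. \<forall>v\<in>V. z + v \<in> T}"
    unfolding E_def[symmetric] using T shift_closed by (simp add: compact_Int_closed closed_INT)
  have escape_sets: "{z \<in> T. z + v \<notin> T} \<in> sets lebesgue" for v
  proof -
    have "{z \<in> T. z + v \<notin> T} = T - (\<lambda>z. z + v) -` T" by auto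
    then show ?thesis using T shift_closed[of v] by (simp add: compact_imp_closed borel_closed sets.Diff)
  qed
  have escape: "measure lebesgue {z \<in> T. z + v \<notin> T} \<le> measure lebesgue (U - T)" if "v \<in> V" for v
  proof -
    have "measure lebesgue {z \<in> T. z + v \<notin> T} \<le> measure lebesgue ((+) (-v) ` (U - T))"
      using small_translate_stays_in_neighbourhood[OF sep] V that shift_closed[of v] T
      by (intro measure_mono_fmeasurable measurable_translation UT escape_sets) auto
    then show ?thesis by (simp add: measure_translation_subtract)
  qed
  have "T - E = (\<Union>v\<in>V. {z \<in> T. z + v \<notin> T})" by (auto simp: E_def)
  then have "measure lebesgue (T - E) \<le> (\<Sum>v\<in>V. measure lebesgue {z \<in> T. z + v \<notin> T})"
    using V escape_sets by (auto intro!: measure_UNION_le)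
  also have "\<dots> \<le> card V * measure lebesgue (U - T)"
    using escape sum_bounded_above[of V "\<lambda>v. measure lebesgue {z \<in> T. z + v \<notin> T}"] by auto
  finally have "measure lebesgue (T - E) \<le> card V * measure lebesgue (U - T)" .
  moreover have "measure lebesgue (T - E) = measure lebesgue T - measure lebesgue E"
    using lmeasurable_compact[OF T] lmeasurable_compact[OF E_compact] unfolding E_def
    by (intro measure_Diff) (auto simp: fmeasurable_def)
  ultimately show "measure lebesgue T - card V * measure lebesgue (U - T) \<le> measure lebesgue E"
    by linarith
qed

lemma translation_stable_compact_core:
  fixes S :: "'a::euclidean_space set"
  assumes S: "S \<in> sets lebesgue" "bounded S" "S \<notin> null_sets lebesgue"
  obtains T \<delta> where "T \<subseteq> S" "\<delta> > 0"
    "\<And>V. finite V \<Longrightarrow> card V \<le> n \<Longrightarrow> \<forall>v\<in>V. norm v < \<delta> \<Longrightarrow>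
       compact {z \<in> T. \<forall>v\<in>V. z + v \<in> T} \<and> measure lebesgue {z \<in> T. \<forall>v\<in>V. z + v \<in> T} > 0"
proof -
  have S_fin: "S \<in> lmeasurable" using S by (intro bounded_set_imp_lmeasurable)
  define m where "m = measure lebesgue S"
  have "m \<noteq> 0"
    using S(3) S_fin emeasure_eq_measure2[OF S_fin] by (auto simp: m_def null_sets_def)
  then have m: "m > 0" using measure_nonneg[of lebesgue S] unfolding m_def by linarith
  define \<eta> where "\<eta> = m / (2 * n + 2)"
  have \<eta>: "\<eta> > 0" "(2 * n + 1) * \<eta> < m" using m by (auto simp: \<eta>_def field_simps)
  obtain T where T: "closed T" "T \<subseteq> S" "S - T \<in> lmeasurable" "emeasure lebesgue (S - T) < \<eta>"
    using sets_lebesgue_inner_closed[OF S(1) \<eta>(1)] by blast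
  obtain U where U: "open U" "S \<subseteq> U" "U - S \<in> lmeasurable" "emeasure lebesgue (U - S) < \<eta>"
    using sets_lebesgue_outer_open[OF S(1) \<eta>(1)] by blast
  have T_compact: "compact T"
    using T S(2) bounded_subset compact_eq_bounded_closed by blast
  have small: "measure lebesgue (S - T) < \<eta>" "measure lebesgue (U - S) < \<eta>"
    using T U \<eta> by (simp_all add: emeasure_eq_measure2 ennreal_less_iff)
  have UT_split: "U - T = (U - S) \<union> (S - T)" using T U by auto
  then have UT: "U - T \<in> lmeasurable" using T U by auto
  have UT_small: "measure lebesgue (U - T) < 2 * \<eta>"
    using UT_split measure_Un_le[of "U - S" lebesgue "S - T"] T U small
    by (auto dest: fmeasurableD)
  have "m \<le> measure lebesgue T + measure lebesgue (S - T)"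
    using measure_Un_le[of T lebesgue "S - T"] T lmeasurable_compact[OF T_compact]
    by (auto simp: m_def Un_absorb1 dest: fmeasurableD)
  then have T_large: "measure lebesgue T > m - \<eta>" using small by linarith
  obtain \<delta> where \<delta>: "\<delta> > 0" "\<forall>x\<in>T. \<forall>y\<in>-U. \<delta> \<le> dist x y"
    using separate_compact_closed[OF T_compact, of "-U"] U T by auto
  show ?thesis
  proof (rule that[OF T(2) \<delta>(1)], intro conjI)
    fix V :: "'a set" assume V: "finite V" "card V \<le> n" "\<forall>v\<in>V. norm v < \<delta>"
    note core = measure_translation_core_lower_bound[OF T_compact UT \<delta>(2) V(1,3)]
    show "compact {z \<in> T. \<forall>v\<in>V. z + v \<in> T}" by (rule core(1))
    have "card V * measure lebesgue (U - T) \<le> n * (2 * \<eta>)"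
      using V(2) UT_small \<eta>(1) by (intro mult_mono) auto
    then show "measure lebesgue {z \<in> T. \<forall>v\<in>V. z + v \<in> T} > 0"
      using core(2) T_large \<eta>(2) by (simp add: algebra_simps)
  qed
qed

lemma sign_definite_rectangles_in_set:
  fixes c :: "'n::finite pp \<Rightarrow> real"
  assumes C2: "C2_on (-Z) c" and det: "\<forall>x y. (x,y) \<notin> Z \<longrightarrow> det (mixed_hess c x y) \<noteq> 0"
    and Z_null: "Z \<in> null_sets lebesgue"
    and S: "S \<in> sets lebesgue" "S \<notin> null_sets lebesgue"
  obtains E \<sigma> a b where "compact E" "measure lebesgue E > 0" "\<sigma> \<in> {-1, 1::real}"
    "\<And>z. z \<in> E \<Longrightarrow> z \<in> S \<and> z + (a, 0) \<in> S \<and> z + (0, b) \<in> S \<and> z + (a, b) \<in> S"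
    "\<And>z. z \<in> E \<Longrightarrow> \<sigma> * rect_difference c a b z > 0"
proof -
  obtain w \<rho> i j \<sigma> where \<rho>: "\<rho> > 0" and \<sigma>: "\<sigma> \<in> {-1, 1::real}" and B: "ball w (2 * \<rho>) \<subseteq> -Z"
    and sign: "\<forall>u\<in>ball w (2 * \<rho>). \<sigma> * mixed_partial c i j u > 0"
    and hit: "S \<inter> ball w \<rho> \<notin> null_sets lebesgue"
    by (rule sign_ball_hits_set[OF C2 det Z_null S])
  obtain T \<delta> where T: "T \<subseteq> S \<inter> ball w \<rho>" and \<delta>: "\<delta> > 0"
    and core: "\<And>V. finite V \<Longrightarrow> card V \<le> 3 \<Longrightarrow> \<forall>v\<in>V. norm v < \<delta> \<Longrightarrow>
       compact {z \<in> T. \<forall>v\<in>V. z + v \<in> T} \<and> measure lebesgue {z \<in> T. \<forall>v\<in>V. z + v \<in> T} > 0"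
    by (rule translation_stable_compact_core[of "S \<inter> ball w \<rho>" 3]) (use S hit in auto)
  define \<epsilon> where "\<epsilon> = min \<delta> \<rho> / 4"
  have \<epsilon>: "\<epsilon> > 0" "2 * \<epsilon> < \<delta>" "2 * \<epsilon> \<le> \<rho>" using \<delta> \<rho> by (auto simp: \<epsilon>_def)
  define a :: "'n pt" where "a = \<epsilon> *\<^sub>R axis i 1"
  define b :: "'n pt" where "b = \<epsilon> *\<^sub>R axis j 1"
  define V where "V = {(a, 0), (0, b), (a, b)}"
  have "norm (a, b) \<le> 2 * \<epsilon>"
    using norm_Pair_le[of a b] \<epsilon> by (simp add: a_def b_def)
  then have "\<forall>v\<in>V. norm v < \<delta>" using \<epsilon> by (auto simp: V_def a_def b_def)
  moreover have "finite V" "card V \<le> 3" by (auto simp: V_def card_insert_le_m1)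
  ultimately have E: "compact {z \<in> T. \<forall>v\<in>V. z + v \<in> T}" "measure lebesgue {z \<in> T. \<forall>v\<in>V. z + v \<in> T} > 0"
    using core by blast+
  show ?thesis
  proof (rule that[OF E \<sigma>])
    fix z assume "z \<in> {z \<in> T. \<forall>v\<in>V. z + v \<in> T}"
    then have z: "z \<in> T" "z + (a, 0) \<in> T" "z + (0, b) \<in> T" "z + (a, b) \<in> T"
      by (auto simp: V_def)
    then show "z \<in> S \<and> z + (a, 0) \<in> S \<and> z + (0, b) \<in> S \<and> z + (a, b) \<in> S" using T by auto
    show "\<sigma> * rect_difference c a b z > 0"
      unfolding a_def b_def using z(1) T by (intro rect_difference_sign[OF C2 B sign _ \<epsilon>(1,3)]) auto
  qed
qed

lemma compact_sections_lmeasurable: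
  fixes E :: "('a::euclidean_space \<times> 'b::euclidean_space) set"
  assumes E: "compact E"
  shows "{y. (x, y) \<in> E} \<in> lmeasurable" "{x. (x, y) \<in> E} \<in> lmeasurable"
proof -
  have "closed (Pair x -` E)" "closed ((\<lambda>x. (x, y)) -` E)"
    by (auto intro!: closed_vimage[OF compact_imp_closed[OF E]] continuous_intros)
  moreover have "Pair x -` E \<subseteq> snd ` E" "(\<lambda>x. (x, y)) -` E \<subseteq> fst ` E" by force+
  moreover have "bounded (snd ` E)" "bounded (fst ` E)"
    using E by (auto intro!: compact_imp_bounded compact_continuous_image continuous_intros)
  ultimately show "{y. (x, y) \<in> E} \<in> lmeasurable" "{x. (x, y) \<in> E} \<in> lmeasurable"
    by (auto simp: vimage_def intro!: bounded_set_imp_lmeasurable borel_closed dest: bounded_subset)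
qed

lemma translate_image_eq: "(+) v ` E = {z. z - v \<in> E}" for v :: "'a::ab_group_add"
  by (force simp: algebra_simps)

lemma indicator_translate_difference:
  fixes A :: "'a::euclidean_space set"
  assumes A: "A \<in> lmeasurable"
  shows "integrable lebesgue (\<lambda>y. indicator A y - indicator ((+) t ` A) y :: real)"
    and "(\<integral>y. indicator A y - indicator ((+) t ` A) y \<partial>lebesgue) = (0::real)"
  using A measurable_translation[OF A, of t] measure_translation[of t A]
  by (auto simp: fmeasurable_def)

lemma integrable_continuous_indicator:
  fixes c :: "'a::euclidean_space \<Rightarrow> real"
  assumes c: "continuous_on UNIV c" and K: "compact K"
  shows "integrable lebesgue (\<lambda>z. c z * indicator K z)"
proof -
  have "integrable lborel (\<lambda>z. indicator K z *\<^sub>R c z)"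
    using K continuous_on_subset[OF c] by (intro borel_integrable_compact) auto
  moreover have "(\<lambda>z. c z * indicator K z) \<in> borel_measurable lborel"
    using borel_measurable_continuous_onI[OF c] borel_compact[OF K]
    by (intro borel_measurable_times borel_measurable_indicator) auto
  ultimately show ?thesis by (simp add: integrable_completion mult.commute)
qed

lemma integral_continuous_indicator_translate:
  fixes c :: "'a::euclidean_space \<Rightarrow> real"
  assumes c: "continuous_on UNIV c" and E: "compact E"
  shows "(\<integral>z. c z * indicator ((+) v ` E) z \<partial>lebesgue) = (\<integral>z. c (z + v) * indicator E z \<partial>lebesgue)"
proof -
  have c_borel: "c \<in> borel_measurable borel" using c by (rule borel_measurable_continuous_onI)
  have c_shift: "(\<lambda>z. c (z + v)) \<in> borel_measurable borel"
    by (intro borel_measurable_continuous_onI continuous_on_compose2[OF c]) (auto intro!: continuous_intros)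
  have sets: "E \<in> sets borel" "(+) v ` E \<in> sets borel"
    using E by (simp_all add: borel_compact compact_translation)
  have "(\<integral>z. c z * indicator ((+) v ` E) z \<partial>lebesgue) = (\<integral>z. c z * indicator ((+) v ` E) z \<partial>lborel)"
    using c_borel sets by (intro integral_completion) simp
  also have "\<dots> = (\<integral>z. c z * indicator ((+) v ` E) z \<partial>distr lborel borel ((+) v))"
    by (simp add: lborel_distr_plus)
  also have "\<dots> = (\<integral>z. c (v + z) * indicator ((+) v ` E) (v + z) \<partial>lborel)"
    using c_borel sets by (subst integral_distr) auto
  also have "\<dots> = (\<integral>z. c (z + v) * indicator E z \<partial>lborel)"
    by (intro Bochner_Integration.integral_cong) (auto simp: indicator_def add.commute image_iff)
  also have "\<dots> = (\<integral>z. c (z + v) * indicator E z \<partial>lebesgue)"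
    using c_shift sets by (intro integral_completion[symmetric]) simp
  finally show ?thesis .
qed

definition rect_perturbation ::
  "('a::euclidean_space \<times> 'b::euclidean_space) set \<Rightarrow> 'a \<Rightarrow> 'b \<Rightarrow> 'a \<times> 'b \<Rightarrow> real" where
  "rect_perturbation E a b z = indicator E z - indicator ((+) (a, 0) ` E) z
     - indicator ((+) (0, b) ` E) z + indicator ((+) (a, b) ` E) z"

lemma rect_perturbation_bounded: "\<bar>rect_perturbation E a b z\<bar> \<le> 2"
  by (simp add: rect_perturbation_def indicator_def)

lemma rect_perturbation_vanishes:
  "z \<notin> E \<union> (+) (a, 0) ` E \<union> (+) (0, b) ` E \<union> (+) (a, b) ` E \<Longrightarrow> rect_perturbation E a b z = 0"
  by (simp add: rect_perturbation_def)

lemma rect_perturbation_integrable: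
  assumes "compact E"
  shows "integrable lebesgue (rect_perturbation E a b)"
proof -
  have "integrable lebesgue (indicator ((+) v ` E) :: _ \<Rightarrow> real)" for v
  proof -
    have "(+) v ` E \<in> lmeasurable" by (intro lmeasurable_compact compact_translation assms)
    then show ?thesis by (auto simp: fmeasurable_def)
  qed
  from this[of 0] this[of "(a, 0)"] this[of "(0, b)"] this[of "(a, b)"] show ?thesis
    unfolding rect_perturbation_def by simp
qed

text \<open>Every horizontal and vertical section of the perturbation is integrable with integral
  zero, because it is a difference of two sets and their common translates.\<close>

lemma rect_perturbation_marginals:
  assumes E: "compact E"
  shows "integrable lebesgue (\<lambda>y. rect_perturbation E a b (x, y))"
    and "(\<integral>y. rect_perturbation E a b (x, y) \<partial>lebesgue) = 0"
    and "integrable lebesgue (\<lambda>x. rect_perturbation E a b (x, y))"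
    and "(\<integral>x. rect_perturbation E a b (x, y) \<partial>lebesgue) = 0"
proof -
  define A0 A1 where "A0 = {y. (x, y) \<in> E}" and "A1 = {y. (x - a, y) \<in> E}"
  have "(\<lambda>y. rect_perturbation E a b (x, y)) = (\<lambda>y.
      (indicator A0 y - indicator ((+) b ` A0) y) - (indicator A1 y - indicator ((+) b ` A1) y))"
    by (auto simp: rect_perturbation_def translate_image_eq indicator_def A0_def A1_def)
  moreover have "A0 \<in> lmeasurable" "A1 \<in> lmeasurable"
    using compact_sections_lmeasurable(1)[OF E] by (auto simp: A0_def A1_def)
  ultimately show "integrable lebesgue (\<lambda>y. rect_perturbation E a b (x, y))"
    "(\<integral>y. rect_perturbation E a b (x, y) \<partial>lebesgue) = 0"
    by (simp_all add: indicator_translate_difference)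
next
  define B0 B1 where "B0 = {x. (x, y) \<in> E}" and "B1 = {x. (x, y - b) \<in> E}"
  have "(\<lambda>x. rect_perturbation E a b (x, y)) = (\<lambda>x.
      (indicator B0 x - indicator ((+) a ` B0) x) - (indicator B1 x - indicator ((+) a ` B1) x))"
    by (auto simp: rect_perturbation_def translate_image_eq indicator_def B0_def B1_def)
  moreover have "B0 \<in> lmeasurable" "B1 \<in> lmeasurable"
    using compact_sections_lmeasurable(2)[OF E] by (auto simp: B0_def B1_def)
  ultimately show "integrable lebesgue (\<lambda>x. rect_perturbation E a b (x, y))"
    "(\<integral>x. rect_perturbation E a b (x, y) \<partial>lebesgue) = 0"
    by (simp_all add: indicator_translate_difference)
qed

lemma rect_perturbation_cost:
  fixes c :: "'a::euclidean_space \<times> 'b::euclidean_space \<Rightarrow> real"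
  assumes c: "continuous_on UNIV c" and E: "compact E"
  shows "integrable lebesgue (\<lambda>z. c z * rect_perturbation E a b z)"
    and "(\<integral>z. c z * rect_perturbation E a b z \<partial>lebesgue)
           = (\<integral>z. rect_difference c a b z * indicator E z \<partial>lebesgue)"
proof -
  have c_shift: "continuous_on UNIV (\<lambda>z. c (z + v))" for v
    by (intro continuous_on_compose2[OF c]) (auto intro!: continuous_intros)
  have int: "integrable lebesgue (\<lambda>z. c z * indicator ((+) v ` E) z)"
    "integrable lebesgue (\<lambda>z. c (z + v) * indicator E z)" for v
    using E by (auto intro!: integrable_continuous_indicator c c_shift compact_translation)
  have "(\<lambda>z. c z * rect_perturbation E a b z) = (\<lambda>z. c z * indicator E z
      - c z * indicator ((+) (a, 0) ` E) z - c z * indicator ((+) (0, b) ` E) z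
      + c z * indicator ((+) (a, b) ` E) z)"
    by (simp add: rect_perturbation_def algebra_simps)
  moreover have "(\<lambda>z. rect_difference c a b z * indicator E z) = (\<lambda>z. c z * indicator E z
      - c (z + (a, 0)) * indicator E z - c (z + (0, b)) * indicator E z
      + c (z + (a, b)) * indicator E z)"
    by (simp add: rect_difference_def algebra_simps)
  ultimately show "integrable lebesgue (\<lambda>z. c z * rect_perturbation E a b z)"
    "(\<integral>z. c z * rect_perturbation E a b z \<partial>lebesgue)
           = (\<integral>z. rect_difference c a b z * indicator E z \<partial>lebesgue)"
    using int[of 0] int[of "(a, 0)"] int[of "(0, b)"] int[of "(a, b)"]
    by (simp_all add: integral_continuous_indicator_translate[OF c E])
qed

lemma slack_set_not_null:
  fixes h hb :: "'n::finite pp \<Rightarrow> real"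
  assumes meas: "h \<in> borel_measurable lebesgue" "hb \<in> borel_measurable lebesgue"
    and bounds: "AE z in lebesgue. 0 \<le> h z" "AE z in lebesgue. h z \<le> hb z"
    and not_extreme: "\<not> geom_extreme hb h"
  obtains \<delta> where "\<delta> > 0" "{z. \<delta> \<le> h z \<and> h z \<le> hb z - \<delta>} \<in> sets lebesgue"
    "{z. \<delta> \<le> h z \<and> h z \<le> hb z - \<delta>} \<notin> null_sets lebesgue"
proof -
  define S where "S n = {z. 1 / Suc n \<le> h z \<and> h z \<le> hb z - 1 / Suc n}" for n :: nat
  have S_sets: "S n \<in> sets lebesgue" for n
  proof -
    have "{z \<in> space lebesgue. 1 / Suc n \<le> h z \<and> h z \<le> hb z - 1 / Suc n} \<in> sets lebesgue"
      using meas by measurable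
    then show ?thesis by (simp add: S_def)
  qed
  have slack_in_union: "z \<in> (\<Union>n. S n)" if slack: "0 < h z" "h z < hb z" for z
  proof -
    obtain n where "inverse (Suc n) < min (h z) (hb z - h z)"
      using reals_Archimedean[of "min (h z) (hb z - h z)"] slack by auto
    then have "z \<in> S n" by (auto simp: S_def inverse_eq_divide)
    then show ?thesis by blast
  qed
  have "(\<Union>n. S n) \<notin> null_sets lebesgue"
  proof
    assume "(\<Union>n. S n) \<in> null_sets lebesgue"
    then have "AE z in lebesgue. z \<notin> (\<Union>n. S n)" by (rule AE_not_in)
    then have "AE z in lebesgue. h z = hb z * indicator {z. 0 < h z} z"
      using bounds
    proof eventually_elim
      case (elim z)
      then have "\<not> (0 < h z \<and> h z < hb z)" using slack_in_union by blast
      with elim show ?case by (auto simp: indicator_def)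
    qed
    moreover have "{z \<in> space lebesgue. 0 < h z} \<in> sets lebesgue" using meas by measurable
    ultimately show False using not_extreme unfolding geom_extreme_def by auto
  qed
  then obtain n where "S n \<notin> null_sets lebesgue" by (meson null_sets_UN)
  then show ?thesis using that[of "1 / Suc n"] S_sets unfolding S_def by auto
qed

text \<open>Adding an integrable function with integral zero does not change an integral, whether or
  not the other summand is integrable.\<close>

lemma integral_add_null_integral:
  fixes f g :: "'a \<Rightarrow> real"
  assumes g: "integrable M g" "(\<integral>y. g y \<partial>M) = 0"
  shows "(\<integral>y. f y + g y \<partial>M) = (\<integral>y. f y \<partial>M)"
proof (cases "integrable M f")
  case True
  then show ?thesis using g by simp
next
  case False
  have "\<not> integrable M (\<lambda>y. f y + g y)"
  proof
    assume "integrable M (\<lambda>y. f y + g y)"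
    then have "integrable M (\<lambda>y. (f y + g y) - g y)"
      using g(1) by (rule Bochner_Integration.integrable_diff)
    then show False using False by simp
  qed
  then show ?thesis using False by (simp add: not_integrable_integral_eq)
qed

lemma Gamma_bd_add_null_marginals:
  fixes \<phi> :: "'n::finite pp \<Rightarrow> real"
  assumes h: "h \<in> Gamma_bd f g hb"
    and \<phi>: "integrable lebesgue \<phi>" "compact K" "\<And>z. z \<notin> K \<Longrightarrow> \<phi> z = 0"
    and fst_marg: "\<And>x. integrable lebesgue (\<lambda>y. \<phi> (x, y))" "\<And>x. (\<integral>y. \<phi> (x, y) \<partial>lebesgue) = 0"
    and snd_marg: "\<And>y. integrable lebesgue (\<lambda>x. \<phi> (x, y))" "\<And>y. (\<integral>x. \<phi> (x, y) \<partial>lebesgue) = 0"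
    and bounds: "AE z in lebesgue. 0 \<le> h z + \<phi> z \<and> h z + \<phi> z \<le> hb z"
  shows "(\<lambda>z. h z + \<phi> z) \<in> Gamma_bd f g hb"
proof -
  obtain Kh where Kh: "compact Kh" "AE z in lebesgue. z \<notin> Kh \<longrightarrow> h z = 0"
    and h_int: "integrable lebesgue h"
    using h by (auto simp: Gamma_bd_def Gamma_def L1c_def)
  have "AE z in lebesgue. z \<notin> Kh \<union> K \<longrightarrow> h z + \<phi> z = 0"
    using Kh(2) by eventually_elim (simp add: \<phi>(3))
  then have "L1c (\<lambda>z. h z + \<phi> z)"
    unfolding L1c_def using h_int \<phi>(1,2) Kh(1) by blast
  moreover have "AE x in lebesgue. (\<integral>y. h (x, y) + \<phi> (x, y) \<partial>lebesgue) = f x"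
    using h by (auto simp: Gamma_bd_def Gamma_def integral_add_null_integral fst_marg)
  moreover have "AE y in lebesgue. (\<integral>x. h (x, y) + \<phi> (x, y) \<partial>lebesgue) = g y"
    using h by (auto simp: Gamma_bd_def Gamma_def integral_add_null_integral snd_marg)
  ultimately show ?thesis
    using bounds by (auto simp: Gamma_bd_def Gamma_def elim: AE_mp)
qed

lemma rect_perturbation_admissible:
  fixes h hb :: "'n::finite pp \<Rightarrow> real"
  assumes h: "h \<in> Gamma_bd f g hb" and E: "compact E"
    and corners: "\<And>z. z \<in> E \<Longrightarrow> z \<in> S \<and> z + (a, 0) \<in> S \<and> z + (0, b) \<in> S \<and> z + (a, b) \<in> S"
    and slack: "S = {z. \<delta> \<le> h z \<and> h z \<le> hb z - \<delta>}" and \<kappa>: "\<bar>\<kappa>\<bar> \<le> \<delta> / 2"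
  shows "(\<lambda>z. h z + \<kappa> * rect_perturbation E a b z) \<in> Gamma_bd f g hb"
proof -
  define K where "K = E \<union> (+) (a, 0) ` E \<union> (+) (0, b) ` E \<union> (+) (a, b) ` E"
  have "K \<subseteq> S" unfolding K_def using corners by (auto simp: add.commute)
  then have K_slack: "\<delta> \<le> h z \<and> h z \<le> hb z - \<delta>" if "z \<in> K" for z
    using that unfolding slack by blast
  have small: "\<bar>\<kappa> * rect_perturbation E a b z\<bar> \<le> \<delta>" for z
  proof -
    have "\<bar>\<kappa> * rect_perturbation E a b z\<bar> \<le> \<delta> / 2 * 2"
      unfolding abs_mult using \<kappa> rect_perturbation_bounded[of E a b z] by (intro mult_mono) auto
    then show ?thesis by simp
  qed
  have "AE z in lebesgue. 0 \<le> h z \<and> h z \<le> hb z"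
    using h by (auto simp: Gamma_bd_def Gamma_def elim: AE_mp)
  then have "AE z in lebesgue. 0 \<le> h z + \<kappa> * rect_perturbation E a b z \<and>
      h z + \<kappa> * rect_perturbation E a b z \<le> hb z"
  proof eventually_elim
    case (elim z)
    show ?case
    proof (cases "z \<in> K")
      case True
      then show ?thesis using K_slack[of z] small[of z] by (simp add: abs_le_iff)
    next
      case False
      then show ?thesis using elim by (simp add: K_def rect_perturbation_vanishes)
    qed
  qed
  moreover have "compact K" unfolding K_def by (intro compact_Un compact_translation E)
  ultimately show ?thesis
    using rect_perturbation_marginals[OF E] rect_perturbation_integrable[OF E]
    by (intro Gamma_bd_add_null_marginals[OF h, where K = K])
       (auto simp: K_def rect_perturbation_vanishes)
qed

lemma integrable_bounded_mult:
  fixes c h :: "'a \<Rightarrow> real"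
  assumes c: "c \<in> borel_measurable M" "\<And>z. \<bar>c z\<bar> \<le> B" and h: "integrable M h"
  shows "integrable M (\<lambda>z. c z * h z)"
proof (rule Bochner_Integration.integrable_bound)
  show "integrable M (\<lambda>z. B * h z)" using h by simp
  show "(\<lambda>z. c z * h z) \<in> borel_measurable M"
    using c(1) borel_measurable_integrable[OF h] by (rule borel_measurable_times)
  have "\<bar>c z\<bar> * \<bar>h z\<bar> \<le> \<bar>B\<bar> * \<bar>h z\<bar>" for z
    using c(2)[of z] by (intro mult_right_mono) auto
  then show "AE z in M. norm (c z * h z) \<le> norm (B * h z)" by (simp add: abs_mult)
qed

lemma I_c_rect_perturbation:
  fixes c h :: "'n::finite pp \<Rightarrow> real"
  assumes c: "continuous_on UNIV c" "\<And>z. \<bar>c z\<bar> \<le> B" and h: "integrable lebesgue h" and E: "compact E"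
  shows "I_c c (\<lambda>z. h z + \<kappa> * rect_perturbation E a b z)
           = I_c c h + \<kappa> * (\<integral>z. rect_difference c a b z * indicator E z \<partial>lebesgue)"
proof -
  have "c \<in> borel_measurable lebesgue"
    using borel_measurable_continuous_onI[OF c(1)] by (simp add: measurable_completion)
  then have "integrable lebesgue (\<lambda>z. c z * h z)" using c(2) h by (rule integrable_bounded_mult)
  then show ?thesis
    using rect_perturbation_cost[OF c(1) E, of a b]
    by (simp add: I_c_def distrib_left mult.left_commute)
qed

lemma integral_indicator_pos:
  fixes D :: "'a::euclidean_space \<Rightarrow> real"
  assumes D: "continuous_on UNIV D" and E: "compact E" "measure lebesgue E > 0"
    and pos: "\<And>z. z \<in> E \<Longrightarrow> 0 < D z"
  shows "0 < (\<integral>z. D z * indicator E z \<partial>lebesgue)"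
proof -
  have "E \<noteq> {}" using E(2) by auto
  moreover have "continuous_on E D" using continuous_on_subset[OF D] by simp
  ultimately obtain z0 where z0: "z0 \<in> E" "\<And>z. z \<in> E \<Longrightarrow> D z0 \<le> D z"
    using continuous_attains_inf[OF E(1)] by blast
  have "0 < D z0 * measure lebesgue E" using pos[OF z0(1)] E(2) by simp
  also have "\<dots> = (\<integral>z. D z0 * indicator E z \<partial>lebesgue)" by simp
  also have "\<dots> \<le> (\<integral>z. D z * indicator E z \<partial>lebesgue)"
  proof (rule integral_mono)
    show "integrable lebesgue (\<lambda>z. D z0 * indicator E z)"
      using lmeasurable_compact[OF E(1)] by (auto simp: fmeasurable_def)
    show "integrable lebesgue (\<lambda>z. D z * indicator E z)"
      by (rule integrable_continuous_indicator[OF D E(1)])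
    show "D z0 * indicator E z \<le> D z * indicator E z" for z
      using z0(2) by (cases "z \<in> E") auto
  qed
  finally show ?thesis .
qed

theorem theorem7p2:
  fixes c :: "'n::finite pp \<Rightarrow> real"
    and hb :: "'n pp \<Rightarrow> real"
    and f g :: "'n pt \<Rightarrow> real"
    and h :: "'n pp \<Rightarrow> real"
  assumes "continuous_on UNIV c"
    and "cost_assms c"
    and "hb \<in> borel_measurable lebesgue"
    and "AE z in lebesgue. 0 \<le> hb z"
    and "\<exists>M. AE z in lebesgue. \<bar>hb z\<bar> \<le> M"
    and "\<exists>K. compact K \<and> (AE z in lebesgue. z \<notin> K \<longrightarrow> hb z = 0)"
    and "L1c f" and "AE x in lebesgue. 0 \<le> f x"
    and "L1c g" and "AE y in lebesgue. 0 \<le> g y"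
    and "Gamma_bd f g hb \<noteq> {}"
    and "h \<in> Gamma_bd f g hb"
    and "\<forall>h' \<in> Gamma_bd f g hb. I_c c h \<le> I_c c h'"
  shows "geom_extreme hb h"
proof (rule ccontr)
  assume not_extreme: "\<not> geom_extreme hb h"
  obtain B Z where c_bound: "\<And>z. \<bar>c z\<bar> \<le> B" and Z: "Z \<in> null_sets lebesgue" "C2_on (-Z) c"
      "\<forall>x y. (x, y) \<notin> Z \<longrightarrow> det (mixed_hess c x y) \<noteq> 0"
    using assms(2) unfolding cost_assms_def by blast
  have h: "integrable lebesgue h" "AE z in lebesgue. 0 \<le> h z" "AE z in lebesgue. h z \<le> hb z"
    using assms(12) by (auto simp: Gamma_bd_def Gamma_def L1c_def)
  obtain \<delta> where \<delta>: "\<delta> > 0" and S: "{z. \<delta> \<le> h z \<and> h z \<le> hb z - \<delta>} \<in> sets lebesgue"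
      "{z. \<delta> \<le> h z \<and> h z \<le> hb z - \<delta>} \<notin> null_sets lebesgue"
    by (rule slack_set_not_null[OF borel_measurable_integrable[OF h(1)] assms(3) h(2,3) not_extreme])
  define S where "S = {z. \<delta> \<le> h z \<and> h z \<le> hb z - \<delta>}"
  obtain E \<sigma> a b where E: "compact (E :: 'n pp set)" "measure lebesgue E > 0" and \<sigma>: "\<sigma> \<in> {-1, 1::real}"
    and corners: "\<And>z. z \<in> E \<Longrightarrow> z \<in> S \<and> z + (a, 0) \<in> S \<and> z + (0, b) \<in> S \<and> z + (a, b) \<in> S"
    and sign: "\<And>z. z \<in> E \<Longrightarrow> \<sigma> * rect_difference c a b z > 0"
    by (rule sign_definite_rectangles_in_set[OF Z(2,3,1) S[folded S_def]]) (rule that)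
  define \<kappa> where "\<kappa> = - \<sigma> * \<delta> / 2"
  define J where "J = (\<integral>z. rect_difference c a b z * indicator E z \<partial>lebesgue)"
  have \<kappa>_small: "\<bar>\<kappa>\<bar> \<le> \<delta> / 2" using \<sigma> \<delta> by (auto simp: \<kappa>_def)
  have "(\<lambda>z. h z + \<kappa> * rect_perturbation E a b z) \<in> Gamma_bd f g hb"
    by (rule rect_perturbation_admissible[OF assms(12) E(1) corners S_def \<kappa>_small])
  moreover have "I_c c (\<lambda>z. h z + \<kappa> * rect_perturbation E a b z) = I_c c h + \<kappa> * J"
    unfolding J_def by (rule I_c_rect_perturbation[OF assms(1) c_bound h(1) E(1)])
  ultimately have "I_c c h \<le> I_c c h + \<kappa> * J" using assms(13) by metis
  moreover have "0 < (\<integral>z. \<sigma> * rect_difference c a b z * indicator E z \<partial>lebesgue)"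
    using rect_difference_continuous[OF assms(1)] sign
    by (intro integral_indicator_pos[OF _ E] continuous_on_mult_left)
  then have "0 < \<sigma> * J" by (simp add: J_def mult.assoc)
  moreover have "\<kappa> * J = - (\<delta> / 2) * (\<sigma> * J)" by (simp add: \<kappa>_def)
  ultimately show False
    using \<delta> mult_pos_pos[of "\<delta> / 2" "\<sigma> * J"] by linarith
qed

end
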